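(* Let $k>l\ge0$ be integers with $k+l\ge3$, $n_0$ an integer with $l\le n_0<k$, $\Delta=k-l$, $f:\mathbb{N}\to[0,\infty)$, and set $\gamma_r=\beta^{lk}_{n_0+r\Delta}$, $\delta_r=f(n_0+r\Delta)$. Let $(d_r)_{r\in\mathbb{N}}$ be a solution, with arbitrary initial values $d_0,d_1\in\mathbb{C}$, of $$d_{r+2}-\frac{1+i\delta_{r+1}}{\gamma_{r+2}}d_{r+1}-\frac{\gamma_{r+1}}{\gamma_{r+2}}d_r=0\qquad(r\in\mathbb{N}).$$ Assume that $\delta_{r+1}/\gamma_{r+2}$ admits an asymptotic expansion in powers of $r^{-1/2}$, $$\frac{\delta_{r+1}}{\gamma_{r+2}}\sim\kappa+\frac{L_1}{r^{1/2}}+\frac{L_2}{r}+\cdots$$ with $\kappa<2$. Then $(d_r)_{r\in\mathbb{N}}\in\ell^2(\mathbb{N};\mathbb{C})$.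
   Context: For integers $x$ and $s\ge0$, $(x,s)=x(x+1)\cdots(x+s-1)$ ($=1$ if $s=0$), with the convention $(x,s)=0$ whenever $x$ is a negative integer; for integers $n$ and $k,l\ge0$, $\beta^{kl}_n=\sqrt{(n-l+1,l)(n-l+1,k)}$ (so $\gamma_r\neq0$ for $r\ge1$). A function $g:\mathbb{N}\to\mathbb{C}$ admits an asymptotic expansion $g(r)\sim\sum_{s\ge0}\lambda_sr^{-s/2}$ if for every $S\in\mathbb{N}$ there are $C,N$ with $|g(r)-\sum_{s=0}^S\lambda_sr^{-s/2}|\le Cr^{-(S+1)/2}$ for all $r\ge N$. *)

theory Defs
  imports "HOL-Analysis.Analysis"
begin

definition rising :: "int \<Rightarrow> nat \<Rightarrow> real" where
  "rising x s = (if x < 0 then 0 else pochhammer (real_of_int x) s)"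

definition beta :: "nat \<Rightarrow> nat \<Rightarrow> int \<Rightarrow> real" where
  "beta k l n = sqrt (rising (n - int l + 1) l * rising (n - int l + 1) k)"

definition has_asymp_expansion :: "(nat \<Rightarrow> complex) \<Rightarrow> (nat \<Rightarrow> complex) \<Rightarrow> bool" where
  "has_asymp_expansion g lam \<longleftrightarrow>
     (\<forall>S::nat. \<exists>C::real. \<exists>N::nat. \<forall>r\<ge>N.
        cmod (g r - (\<Sum>s\<le>S. lam s * complex_of_real (real r powr (- real s / 2))))
          \<le> C * real r powr (- (real S + 1) / 2))"

end

theory Submission
  imports Defs
begin

(*
  Put p r = gamma (r + 1) and let delta r = f (n0 + r (k - l)). Multiplied out, the recurrence
  reads p (r + 1) d (r + 2) = p r d r + (1 + i delta (r + 1)) d (r + 1), and it changes the energy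
    E r = p r^2 / p (r + 1) |d r|^2 + p r |d (r + 1)|^2 - delta r Im (d (r + 1) conj (d r))
  by an explicit quadratic form in d r, d (r + 1). Because delta r / p r tends to kappa < 2 and
  p (r + 1) / p r tends to 1, E r eventually dominates (2 - kappa) / 8 p r (|d r|^2 + |d (r + 1)|^2).
  The increment is at most e r times that quantity, where e r collects three summable errors:
  the defect of log-convexity of the Pochhammer weights, which is O(r^-2); 1 / p r, which is
  O(r^(-3/2)) because k + l >= 3; and the variation of delta r / p r, which is summable because
  the asymptotic expansion holds up to an O(r^(-3/2)) remainder. Hence E r grows by factors
  1 + O(e r), so it stays bounded, and |d (r + 1)|^2 <= C / p r is summable.
*)

section \<open>Asymptotic expansions in powers of r^(-1/2)\<close>

lemma summable_abs_diff_powr: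
  assumes "e \<le> 0"
  shows "summable (\<lambda>r. \<bar>real (Suc r) powr e - real r powr e\<bar>)"
proof -
  have "convergent (\<lambda>r. real r powr e)"
  proof (cases "e = 0")
    case True
    then have "(\<lambda>r. real r powr e) \<longlonglongrightarrow> 1"
      by (intro tendsto_eventually eventually_mono[OF eventually_gt_at_top[of 0]]) auto
    then show ?thesis by (auto simp: convergent_def)
  next
    case False
    then have "(\<lambda>r. real r powr e) \<longlonglongrightarrow> 0"
      using assms by (intro tendsto_neg_powr filterlim_real_sequentially) auto
    then show ?thesis by (auto simp: convergent_def)
  qed
  then obtain L where "(\<lambda>r. real r powr e) \<longlonglongrightarrow> L" by (auto simp: convergent_def)
  then have "summable (\<lambda>r. real r powr e - real (Suc r) powr e)"
    by (rule telescope_summable')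
  moreover have "norm \<bar>real (Suc r) powr e - real r powr e\<bar> \<le> real r powr e - real (Suc r) powr e"
    if "r \<ge> 1" for r
    using that assms powr_mono2'[of e "real r" "real (Suc r)"] by simp
  ultimately show ?thesis by (rule summable_comparison_test') blast
qed

lemma summable_norm_diff_of_close:
  fixes g h :: "nat \<Rightarrow> 'a::real_normed_vector"
  assumes "summable (\<lambda>r. norm (h (Suc r) - h r))" "summable b"
    and "\<And>r. r \<ge> N \<Longrightarrow> norm (g r - h r) \<le> b r"
  shows "summable (\<lambda>r. norm (g (Suc r) - g r))"
proof (rule summable_comparison_test'[where N = N])
  show "summable (\<lambda>r. b (Suc r) + b r + norm (h (Suc r) - h r))"
    using assms(1,2) by (intro summable_add) (simp_all add: summable_Suc_iff)
  fix r assume "N \<le> r"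
  have "norm (g (Suc r) - g r)
      \<le> norm (g (Suc r) - h (Suc r)) + norm (g r - h r) + norm (h (Suc r) - h r)"
    using norm_triangle_ineq[of "(g (Suc r) - h (Suc r)) - (g r - h r)" "h (Suc r) - h r"]
      norm_triangle_ineq4[of "g (Suc r) - h (Suc r)" "g r - h r"] by (simp add: algebra_simps)
  then show "norm (norm (g (Suc r) - g r)) \<le> b (Suc r) + b r + norm (h (Suc r) - h r)"
    using assms(3)[of r] assms(3)[of "Suc r"] \<open>N \<le> r\<close> by simp
qed

lemma has_asymp_expansion_tendsto:
  assumes "has_asymp_expansion g lam"
  shows "g \<longlonglongrightarrow> lam 0"
proof -
  from assms obtain C N where CN: "\<forall>r\<ge>N.
      cmod (g r - (\<Sum>s\<le>0. lam s * complex_of_real (real r powr (- real s / 2))))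
        \<le> C * real r powr (- (real 0 + 1) / 2)"
    unfolding has_asymp_expansion_def by blast
  have "\<forall>\<^sub>F r in sequentially. norm (g r - lam 0) \<le> C * real r powr (-1/2)"
    using eventually_ge_at_top[of "max N 1"] by eventually_elim (use CN in auto)
  moreover have "(\<lambda>r. C * real r powr (-1/2)) \<longlonglongrightarrow> 0"
    by (intro tendsto_mult_right_zero tendsto_neg_powr filterlim_real_sequentially) auto
  ultimately have "(\<lambda>r. g r - lam 0) \<longlonglongrightarrow> 0" by (rule Lim_null_comparison)
  then show ?thesis by (simp add: LIM_zero_iff)
qed

lemma has_asymp_expansion_summable_diff:
  assumes "has_asymp_expansion g lam"
  shows "summable (\<lambda>r. norm (g (Suc r) - g r))"
proof -
  define u where "u s r = complex_of_real (real r powr (- real s / 2))" for s r :: nat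
  define h where "h r = (\<Sum>s\<le>2. lam s * u s r)" for r
  from assms obtain C N where "\<forall>r\<ge>N.
      cmod (g r - (\<Sum>s\<le>2. lam s * complex_of_real (real r powr (- real s / 2))))
        \<le> C * real r powr (- (real 2 + 1) / 2)"
    unfolding has_asymp_expansion_def by blast
  then have close: "\<And>r. r \<ge> N \<Longrightarrow> norm (g r - h r) \<le> C * real r powr (-3/2)"
    by (simp add: h_def u_def)
  have "summable (\<lambda>r. norm (h (Suc r) - h r))"
  proof (rule summable_comparison_test'[where N = 0])
    show "summable (\<lambda>r. \<Sum>s\<le>2. norm (lam s) * norm (u s (Suc r) - u s r))"
    proof (intro summable_sum summable_mult)
      fix s :: nat
      have "summable (\<lambda>r. \<bar>real (Suc r) powr (- real s / 2) - real r powr (- real s / 2)\<bar>)"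
        by (rule summable_abs_diff_powr) simp
      then show "summable (\<lambda>r. norm (u s (Suc r) - u s r))"
        by (simp add: u_def flip: of_real_diff)
    qed
    fix r
    have "h (Suc r) - h r = (\<Sum>s\<le>2. lam s * (u s (Suc r) - u s r))"
      by (simp add: h_def sum_subtractf[symmetric] algebra_simps)
    also have "norm \<dots> \<le> (\<Sum>s\<le>2. norm (lam s * (u s (Suc r) - u s r)))"
      by (rule norm_sum)
    finally show "norm (norm (h (Suc r) - h r)) \<le> (\<Sum>s\<le>2. norm (lam s) * norm (u s (Suc r) - u s r))"
      by (simp add: norm_mult)
  qed
  moreover have "summable (\<lambda>r. C * real r powr (-3/2))"
    by (intro summable_mult) (simp add: summable_real_powr_iff)
  ultimately show ?thesis using close by (rule summable_norm_diff_of_close)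
qed

lemma has_asymp_expansion_of_real_Suc:
  assumes "has_asymp_expansion (\<lambda>r. of_real (g (Suc r))) lam"
  shows "g \<longlonglongrightarrow> Re (lam 0)" and "summable (\<lambda>r. \<bar>g (Suc r) - g r\<bar>)"
proof -
  have "(\<lambda>r. Re (of_real (g (Suc r)))) \<longlonglongrightarrow> Re (lam 0)"
    using has_asymp_expansion_tendsto[OF assms] by (rule tendsto_Re)
  then show "g \<longlonglongrightarrow> Re (lam 0)" by (simp add: LIMSEQ_imp_Suc)
  have "summable (\<lambda>r. \<bar>g (Suc (Suc r)) - g (Suc r)\<bar>)"
    using has_asymp_expansion_summable_diff[OF assms] by (simp only: norm_of_real of_real_diff[symmetric])
  then show "summable (\<lambda>r. \<bar>g (Suc r) - g r\<bar>)" by (subst (asm) summable_Suc_iff)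
qed

section \<open>Pochhammer weights\<close>

lemma real_sqrt_le_self: "1 \<le> x \<Longrightarrow> sqrt x \<le> x"
  using real_sqrt_le_mono[of x "x\<^sup>2"] by (simp add: power2_eq_square)

lemma one_plus_power_le:
  fixes t :: real
  assumes "0 \<le> t" "t \<le> 1"
  shows "(1 + t) ^ n \<le> 1 + n * 2 ^ n * t"
proof -
  have "(1 + t) ^ i \<le> 2 ^ n" if "i < n" for i
  proof -
    have "(1 + t) ^ i \<le> 2 ^ i" using assms by (intro power_mono) auto
    also have "\<dots> \<le> 2 ^ n" using that by (intro power_increasing) auto
    finally show ?thesis .
  qed
  then have "(\<Sum>i<n. (1 + t) ^ i) \<le> (\<Sum>i<n. 2 ^ n)"
    by (intro sum_mono) auto
  then have "(\<Sum>i<n. (1 + t) ^ i) * t \<le> n * 2 ^ n * t"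
    using assms by (intro mult_right_mono) auto
  moreover have "(1 + t) ^ n - 1 = t * (\<Sum>i<n. (1 + t) ^ i)"
    using power_diff_1_eq[of "1 + t" n] by simp
  ultimately show ?thesis by (simp add: algebra_simps)
qed

lemma divide_add_mult_le_inverse:
  fixes a D r :: real
  assumes "0 < a" "0 \<le> D" "0 < r"
  shows "D / (a + r * D) \<le> 1 / r"
  using assms by (simp add: field_simps add_pos_nonneg)

lemma power_le_pochhammer:
  fixes x :: real
  assumes "0 \<le> x"
  shows "x ^ n \<le> pochhammer x n"
proof -
  have "x ^ n = (\<Prod>i<n. x)" by simp
  also have "\<dots> \<le> (\<Prod>i<n. x + of_nat i)" using assms by (intro prod_mono) auto
  finally show ?thesis by (simp add: pochhammer_prod atLeast0LessThan)
qed

lemma pochhammer_nonneg_of_nonneg: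
  fixes x :: real
  shows "0 \<le> x \<Longrightarrow> 0 \<le> pochhammer x n"
  using power_le_pochhammer[of x n] zero_le_power[of x n] by linarith

lemma pochhammer_mono:
  fixes x y :: real
  assumes "0 \<le> x" "x \<le> y"
  shows "pochhammer x n \<le> pochhammer y n"
  unfolding pochhammer_prod using assms by (intro prod_mono) auto

lemma pochhammer_shift_le:
  fixes x h :: real
  assumes "0 < x" "0 \<le> h"
  shows "pochhammer (x + h) n \<le> (1 + h / x) ^ n * pochhammer x n"
proof -
  have "x + h + i \<le> (1 + h / x) * (x + i)" for i :: nat
  proof -
    have "h \<le> h / x * (x + i)" using assms by (simp add: field_simps)
    then show ?thesis by (simp add: algebra_simps)
  qed
  then have "pochhammer (x + h) n \<le> (\<Prod>i<n. (1 + h / x) * (x + of_nat i))"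
    unfolding pochhammer_prod atLeast0LessThan using assms by (intro prod_mono) auto
  then show ?thesis by (simp add: prod.distrib pochhammer_prod atLeast0LessThan)
qed

lemma pochhammer_shift_sq_le:
  fixes x h :: real
  assumes "0 < x" "0 \<le> h"
  shows "(pochhammer (x + h) n)\<^sup>2 \<le> (1 + (h / x)\<^sup>2) ^ n * (pochhammer x n * pochhammer (x + 2 * h) n)"
proof -
  have "(x + i + h)\<^sup>2 \<le> (1 + (h / x)\<^sup>2) * ((x + i) * (x + i + 2 * h))" for i :: nat
  proof -
    define y where "y = x + i"
    have "x\<^sup>2 \<le> y * (y + 2 * h)"
      using assms by (simp add: y_def power2_eq_square mult_mono add_increasing2)
    then have "(h / x)\<^sup>2 * x\<^sup>2 \<le> (h / x)\<^sup>2 * (y * (y + 2 * h))"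
      by (rule mult_left_mono) simp
    then have "h\<^sup>2 \<le> (h / x)\<^sup>2 * (y * (y + 2 * h))"
      using assms by (simp add: power_divide)
    then have "(y + h)\<^sup>2 \<le> (1 + (h / x)\<^sup>2) * (y * (y + 2 * h))"
      by (simp add: power2_eq_square algebra_simps)
    then show ?thesis by (simp add: y_def)
  qed
  then have "(\<Prod>i<n. (x + h + of_nat i)\<^sup>2) \<le> (\<Prod>i<n. (1 + (h / x)\<^sup>2) * ((x + i) * (x + 2 * h + i)))"
    using assms by (intro prod_mono) (auto simp: algebra_simps)
  also have "\<dots> = (1 + (h / x)\<^sup>2) ^ n * (pochhammer x n * pochhammer (x + 2 * h) n)"
    by (simp add: prod.distrib pochhammer_prod atLeast0LessThan)
  finally show ?thesis
    by (simp add: pochhammer_prod atLeast0LessThan prod_power_distrib)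
qed

definition pochhammer_weight :: "nat \<Rightarrow> nat \<Rightarrow> real \<Rightarrow> real" where
  "pochhammer_weight k l x = sqrt (pochhammer x k * pochhammer x l)"

lemma pochhammer_weight_pos: "0 < x \<Longrightarrow> 0 < pochhammer_weight k l x"
  by (simp add: pochhammer_weight_def pochhammer_pos)

lemma pochhammer_weight_mono:
  "0 \<le> x \<Longrightarrow> x \<le> y \<Longrightarrow> pochhammer_weight k l x \<le> pochhammer_weight k l y"
  unfolding pochhammer_weight_def
  by (intro real_sqrt_le_mono mult_mono pochhammer_mono pochhammer_nonneg_of_nonneg) auto

lemma sqrt_power_le_pochhammer_weight:
  "0 \<le> x \<Longrightarrow> sqrt (x ^ (k + l)) \<le> pochhammer_weight k l x"
  unfolding pochhammer_weight_def power_add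
  by (intro real_sqrt_le_mono mult_mono power_le_pochhammer pochhammer_nonneg_of_nonneg) auto

lemma one_le_pochhammer_weight:
  assumes "1 \<le> x"
  shows "1 \<le> pochhammer_weight k l x"
proof -
  have "1 \<le> sqrt (x ^ (k + l))" using assms by (simp add: one_le_power)
  also have "\<dots> \<le> pochhammer_weight k l x" using assms by (intro sqrt_power_le_pochhammer_weight) auto
  finally show ?thesis .
qed

lemma pochhammer_weight_shift_le:
  fixes x h :: real
  assumes "0 < x" "0 \<le> h"
  shows "pochhammer_weight k l (x + h) \<le> (1 + h / x) ^ (k + l) * pochhammer_weight k l x"
proof -
  define c where "c = 1 + h / x"
  have c: "1 \<le> c" using assms by (simp add: c_def)
  have "pochhammer (x + h) n \<le> c ^ n * pochhammer x n" for n
    using assms by (simp add: c_def pochhammer_shift_le)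
  then have "pochhammer_weight k l (x + h) \<le> sqrt ((c ^ k * pochhammer x k) * (c ^ l * pochhammer x l))"
    unfolding pochhammer_weight_def using assms c
    by (intro real_sqrt_le_mono mult_mono) (auto simp: pochhammer_nonneg_of_nonneg)
  also have "\<dots> = sqrt (c ^ (k + l)) * pochhammer_weight k l x"
    by (simp add: pochhammer_weight_def power_add real_sqrt_mult mult_ac)
  also have "\<dots> \<le> c ^ (k + l) * pochhammer_weight k l x"
    using c pochhammer_weight_pos[of x k l] assms
    by (intro mult_right_mono real_sqrt_le_self one_le_power) auto
  finally show ?thesis by (simp add: c_def)
qed

lemma pochhammer_weight_shift_sq_le:
  fixes x h :: real
  assumes "0 < x" "0 \<le> h"
  shows "(pochhammer_weight k l (x + h))\<^sup>2
    \<le> (1 + (h / x)\<^sup>2) ^ (k + l) * (pochhammer_weight k l x * pochhammer_weight k l (x + 2 * h))"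
proof -
  define c where "c = 1 + (h / x)\<^sup>2"
  have c: "1 \<le> c" by (simp add: c_def)
  have "(pochhammer_weight k l (x + h))\<^sup>2 = sqrt ((pochhammer (x + h) k)\<^sup>2 * (pochhammer (x + h) l)\<^sup>2)"
    using assms by (simp add: pochhammer_weight_def real_sqrt_mult power_mult_distrib
        pochhammer_nonneg_of_nonneg)
  also have "\<dots> \<le> sqrt ((c ^ k * (pochhammer x k * pochhammer (x + 2 * h) k))
      * (c ^ l * (pochhammer x l * pochhammer (x + 2 * h) l)))"
    unfolding c_def using assms
    by (intro real_sqrt_le_mono mult_mono pochhammer_shift_sq_le) (auto simp: pochhammer_nonneg_of_nonneg)
  also have "\<dots> = sqrt (c ^ (k + l)) * (pochhammer_weight k l x * pochhammer_weight k l (x + 2 * h))"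
    by (simp add: pochhammer_weight_def power_add real_sqrt_mult mult_ac)
  also have "\<dots> \<le> c ^ (k + l) * (pochhammer_weight k l x * pochhammer_weight k l (x + 2 * h))"
    using c pochhammer_weight_pos[of x k l] pochhammer_weight_pos[of "x + 2 * h" k l] assms
    by (intro mult_right_mono real_sqrt_le_self one_le_power) auto
  finally show ?thesis by (simp add: c_def)
qed

lemma pochhammer_weight_progression_sq_le:
  fixes a D :: real
  assumes "0 < a" "0 \<le> D"
  shows "(pochhammer_weight k l (a + real (Suc r) * D))\<^sup>2
    \<le> (1 + (D / (a + real r * D))\<^sup>2) ^ (k + l)
      * (pochhammer_weight k l (a + real r * D) * pochhammer_weight k l (a + real (Suc (Suc r)) * D))"
proof -
  define x where "x = a + real r * D"
  have "0 < x" using assms by (simp add: x_def add_pos_nonneg)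
  moreover have "a + real (Suc r) * D = x + D" "a + real (Suc (Suc r)) * D = x + 2 * D"
    by (simp_all add: x_def algebra_simps)
  ultimately show ?thesis
    using pochhammer_weight_shift_sq_le[of x D k l] assms by (simp flip: x_def)
qed

lemma summable_inverse_pochhammer_weight:
  fixes a D :: real
  assumes "1 \<le> a" "1 \<le> D" "3 \<le> k + l"
  shows "summable (\<lambda>r. 1 / pochhammer_weight k l (a + r * D))"
proof (rule summable_comparison_test'[where N = 0])
  show "summable (\<lambda>r. real (Suc r) powr (-3/2))"
    using summable_Suc_iff[of "\<lambda>r. real r powr (-3/2)"] by (simp add: summable_real_powr_iff)
  fix r :: nat
  define x where "x = a + r * D"
  have "real r * 1 \<le> real r * D" using assms by (intro mult_left_mono) auto
  then have x: "real (Suc r) \<le> x" using assms by (simp add: x_def)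
  have "real (Suc r) powr (3/2) \<le> x powr (3/2)" using x by (intro powr_mono2) auto
  also have "\<dots> = sqrt (x ^ 3)" using x by (simp add: powr_half_sqrt_powr)
  also have "\<dots> \<le> sqrt (x ^ (k + l))" using x assms by (intro real_sqrt_le_mono power_increasing) auto
  also have "\<dots> \<le> pochhammer_weight k l x" using x by (intro sqrt_power_le_pochhammer_weight) auto
  finally have "1 / pochhammer_weight k l x \<le> 1 / real (Suc r) powr (3/2)"
    using x by (intro divide_left_mono mult_pos_pos pochhammer_weight_pos) auto
  then show "norm (1 / pochhammer_weight k l (a + r * D)) \<le> real (Suc r) powr (-3/2)"
    using x pochhammer_weight_pos[of x k l] by (simp add: x_def powr_minus_divide)
qed

lemma tendsto_pochhammer_weight_ratio:
  fixes a D :: real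
  assumes "0 < a" "0 \<le> D"
  shows "(\<lambda>r. pochhammer_weight k l (a + real (Suc r) * D) / pochhammer_weight k l (a + r * D))
    \<longlonglongrightarrow> 1"
proof (rule tendsto_sandwich)
  have x: "0 < a + real r * D" for r using assms by (simp add: add_pos_nonneg)
  have shift: "a + real (Suc r) * D = (a + r * D) + D" for r by (simp add: algebra_simps)
  show "\<forall>\<^sub>F r in sequentially. 1 \<le> pochhammer_weight k l (a + real (Suc r) * D)
      / pochhammer_weight k l (a + r * D)"
  proof (intro always_eventually allI)
    fix r :: nat
    have "pochhammer_weight k l (a + r * D) \<le> pochhammer_weight k l (a + r * D + D)"
      using x[of r] assms by (intro pochhammer_weight_mono) auto
    then show "1 \<le> pochhammer_weight k l (a + real (Suc r) * D) / pochhammer_weight k l (a + r * D)"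
      unfolding shift using pochhammer_weight_pos[OF x[of r]] by simp
  qed
  show "\<forall>\<^sub>F r in sequentially. pochhammer_weight k l (a + real (Suc r) * D)
      / pochhammer_weight k l (a + r * D) \<le> (1 + 1 / real r) ^ (k + l)"
  proof (intro eventually_mono[OF eventually_gt_at_top[of 0]])
    fix r :: nat assume "0 < r"
    have "pochhammer_weight k l (a + real (Suc r) * D)
        \<le> (1 + D / (a + r * D)) ^ (k + l) * pochhammer_weight k l (a + r * D)"
      unfolding shift using x assms by (intro pochhammer_weight_shift_le) auto
    also have "\<dots> \<le> (1 + 1 / real r) ^ (k + l) * pochhammer_weight k l (a + r * D)"
    proof (intro mult_right_mono power_mono add_left_mono)
      show "D / (a + r * D) \<le> 1 / real r"
        using assms \<open>0 < r\<close> by (intro divide_add_mult_le_inverse) auto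
      show "0 \<le> 1 + D / (a + r * D)" "0 \<le> pochhammer_weight k l (a + r * D)"
        using x[of r] assms less_imp_le[OF pochhammer_weight_pos[OF x[of r]]] by auto
    qed
    finally show "pochhammer_weight k l (a + real (Suc r) * D)
        / pochhammer_weight k l (a + r * D) \<le> (1 + 1 / real r) ^ (k + l)"
      using x pochhammer_weight_pos by (simp add: divide_le_eq)
  qed
  show "(\<lambda>r. (1 + 1 / real r) ^ (k + l)) \<longlonglongrightarrow> 1"
    using tendsto_power[OF tendsto_add[OF tendsto_const lim_inverse_n'], of 1 "k + l"] by simp
qed simp

lemma summable_pochhammer_weight_defect:
  fixes a D :: real
  assumes "0 < a" "0 \<le> D"
  shows "summable (\<lambda>r. (1 + (D / (a + r * D))\<^sup>2) ^ n - 1)"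
proof (rule summable_comparison_test'[where N = 1])
  show "summable (\<lambda>r. real n * 2 ^ n * inverse (real r ^ 2))"
    by (intro summable_mult inverse_power_summable) simp
  fix r :: nat assume "1 \<le> r"
  define e where "e = D / (a + r * D)"
  have "e \<le> 1 / r" using assms \<open>1 \<le> r\<close> by (simp add: e_def divide_add_mult_le_inverse)
  moreover have "0 \<le> e" using assms by (simp add: e_def add_pos_nonneg)
  ultimately have "e\<^sup>2 \<le> (1 / r)\<^sup>2" by (rule power_mono)
  moreover have "(1 / real r)\<^sup>2 \<le> 1" using \<open>1 \<le> r\<close> by (simp add: power_le_one)
  ultimately have e2: "e\<^sup>2 \<le> inverse (real r ^ 2)" "e\<^sup>2 \<le> 1"
    by (simp_all add: power_one_over inverse_eq_divide)
  have "1 \<le> (1 + e\<^sup>2) ^ n" by (simp add: one_le_power)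
  moreover have "(1 + e\<^sup>2) ^ n \<le> 1 + real n * 2 ^ n * e\<^sup>2" using e2 by (intro one_plus_power_le) auto
  moreover have "real n * 2 ^ n * e\<^sup>2 \<le> real n * 2 ^ n * inverse (real r ^ 2)"
    using e2 by (intro mult_left_mono) auto
  ultimately show "norm ((1 + (D / (a + r * D))\<^sup>2) ^ n - 1) \<le> real n * 2 ^ n * inverse (real r ^ 2)"
    by (simp add: e_def)
qed

lemma beta_eq_pochhammer_weight:
  "int k \<le> n + 1 \<Longrightarrow> beta l k n = pochhammer_weight k l (of_int (n - int k + 1))"
  by (simp add: beta_def rising_def pochhammer_weight_def)

lemma beta_progression:
  assumes "l < k" "l \<le> n0"
  shows "beta l k (int (n0 + (r + 1) * (k - l)))
    = pochhammer_weight k l (real n0 - real l + 1 + real r * (real k - real l))"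
proof -
  obtain m u where mu: "k = l + m" "n0 = l + u"
    using assms by (metis less_imp_add_positive le_Suc_ex)
  then have "int k \<le> int (n0 + (r + 1) * (k - l)) + 1" by simp
  moreover have "of_int (int (n0 + (r + 1) * (k - l)) - int k + 1)
      = real n0 - real l + 1 + real r * (real k - real l)"
    using mu by (simp add: algebra_simps)
  ultimately show ?thesis by (simp only: beta_eq_pochhammer_weight)
qed

section \<open>An energy estimate for weighted three-term recurrences\<close>

lemma norm_mult_cnj_le: "cmod (v * cnj u) \<le> ((cmod u)\<^sup>2 + (cmod v)\<^sup>2) / 2"
proof -
  have "0 \<le> (cmod u - cmod v)\<^sup>2" by simp
  then show ?thesis by (simp add: norm_mult power2_diff algebra_simps)
qed

lemma bounded_of_summable_growth:
  fixes Q e :: "nat \<Rightarrow> real"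
  assumes growth: "\<And>s. s \<ge> R \<Longrightarrow> Q (Suc s) \<le> (1 + e s) * Q s"
    and "\<And>s. s \<ge> R \<Longrightarrow> Q s \<ge> 0" and "\<And>s. e s \<ge> 0" and "summable e"
  shows "\<exists>M. \<forall>s\<ge>R. Q s \<le> M"
proof -
  have Q_le: "Q (R + n) \<le> Q R * exp (\<Sum>i<n. e (R + i))" for n
  proof (induction n)
    case (Suc n)
    have "Q (R + Suc n) \<le> (1 + e (R + n)) * Q (R + n)" using growth[of "R + n"] by simp
    also have "\<dots> \<le> exp (e (R + n)) * (Q R * exp (\<Sum>i<n. e (R + i)))"
      using Suc assms(2)[of "R + n"] assms(3)[of "R + n"]
      by (intro mult_mono) (auto simp: exp_ge_add_one_self add.commute)
    finally show ?case by (simp add: exp_add mult_ac)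
  qed simp
  have sum_le: "(\<Sum>i<n. e (R + i)) \<le> suminf e" for n
  proof -
    have "(\<Sum>i<n. e (R + i)) = (\<Sum>i\<in>(\<lambda>i. R + i) ` {..<n}. e i)"
      by (simp add: sum.reindex)
    also have "\<dots> \<le> suminf e" using assms(3,4) by (intro sum_le_suminf) auto
    finally show ?thesis .
  qed
  have "Q (R + n) \<le> Q R * exp (suminf e)" for n
    using Q_le[of n] mult_left_mono[OF exp_mono[OF sum_le[of n]] assms(2)[of R]] by simp
  then show ?thesis
    by (metis le_add_diff_inverse)
qed

locale weighted_recurrence =
  fixes p \<delta> :: "nat \<Rightarrow> real" and d :: "nat \<Rightarrow> complex"
  assumes weight_ge_1: "\<And>r. 1 \<le> p r"
    and coupling_nonneg: "\<And>r. 0 \<le> \<delta> r"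
    and recurrence: "\<And>r. of_real (p (Suc r)) * d (Suc (Suc r))
      = of_real (p r) * d r + (1 + \<i> * of_real (\<delta> (Suc r))) * d (Suc r)"
begin

lemma weight_pos: "0 < p r"
  using weight_ge_1[of r] by linarith

definition energy :: "nat \<Rightarrow> real" where
  "energy r = (p r)\<^sup>2 / p (Suc r) * (cmod (d r))\<^sup>2 + p r * (cmod (d (Suc r)))\<^sup>2
    - \<delta> r * Im (d (Suc r) * cnj (d r))"

lemma energy_diff:
  "energy (Suc r) - energy r =
     ((p (Suc r))\<^sup>2 / p (Suc (Suc r)) - p r + 1 / p (Suc r)) * (cmod (d (Suc r)))\<^sup>2
     + 2 * p r / p (Suc r) * Re (d (Suc r) * cnj (d r))
     + (\<delta> r - \<delta> (Suc r) * p r / p (Suc r)) * Im (d (Suc r) * cnj (d r))"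
proof -
  define u v w where "u = d r" and "v = d (Suc r)" and "w = d (Suc (Suc r))"
  have p: "0 < p r" "0 < p (Suc r)" "0 < p (Suc (Suc r))" by (simp_all add: weight_pos)
  have rec: "of_real (p (Suc r)) * w = of_real (p r) * u + (1 + \<i> * of_real (\<delta> (Suc r))) * v"
    using recurrence[of r] by (simp add: u_def v_def w_def)
  have "p (Suc r) * Re w = p r * Re u + Re v - \<delta> (Suc r) * Im v"
    using arg_cong[OF rec, of Re] by simp
  then have Re_w: "Re w = (p r * Re u + Re v - \<delta> (Suc r) * Im v) / p (Suc r)"
    using p by (simp add: field_simps)
  have "p (Suc r) * Im w = p r * Im u + Im v + \<delta> (Suc r) * Re v"
    using arg_cong[OF rec, of Im] by simp
  then have Im_w: "Im w = (p r * Im u + Im v + \<delta> (Suc r) * Re v) / p (Suc r)"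
    using p by (simp add: field_simps)
  show ?thesis
    unfolding energy_def u_def[symmetric] v_def[symmetric] w_def[symmetric] using p
    by (simp add: cmod_power2 Re_w Im_w field_simps) (simp add: algebra_simps power2_eq_square)
qed

lemma energy_ge:
  assumes "0 < \<epsilon>" "\<epsilon> \<le> (2 - \<kappa>) / 4"
    and "1 - \<epsilon> \<le> p r / p (Suc r)" "\<delta> r / p r \<le> \<kappa> + \<epsilon>"
  shows "\<epsilon> / 2 * p r * ((cmod (d r))\<^sup>2 + (cmod (d (Suc r)))\<^sup>2) \<le> energy r"
proof -
  define X Y J where "X = (cmod (d r))\<^sup>2" and "Y = (cmod (d (Suc r)))\<^sup>2"
    and "J = Im (d (Suc r) * cnj (d r))"
  define g where "g = \<delta> r / p r"
  have p: "0 < p r" "0 < p (Suc r)" by (simp_all add: weight_pos)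
  have XY: "0 \<le> X" "0 \<le> Y" by (simp_all add: X_def Y_def)
  have g: "0 \<le> g" "g \<le> \<kappa> + \<epsilon>" using assms(4) p coupling_nonneg[of r] by (simp_all add: g_def)
  have "g * J \<le> g * \<bar>J\<bar>" using g by (simp add: mult_left_mono)
  also have "\<dots> \<le> (\<kappa> + \<epsilon>) * ((X + Y) / 2)"
    using g XY order_trans[OF abs_Im_le_cmod norm_mult_cnj_le]
    by (intro mult_mono) (simp_all add: J_def X_def Y_def)
  finally have gJ: "g * J \<le> (\<kappa> + \<epsilon>) * ((X + Y) / 2)" .
  have "(1 - \<epsilon>) * X \<le> p r / p (Suc r) * X" using assms(3) XY by (intro mult_right_mono)
  moreover have "0 \<le> (1 - 2 * \<epsilon> - \<kappa> / 2) * X + (1 - \<epsilon> - \<kappa> / 2) * Y"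
    using assms(1,2) XY by (intro add_nonneg_nonneg mult_nonneg_nonneg) auto
  moreover have "(1 - \<epsilon>) * X + Y - (\<kappa> + \<epsilon>) * ((X + Y) / 2) - \<epsilon> / 2 * (X + Y)
      = (1 - 2 * \<epsilon> - \<kappa> / 2) * X + (1 - \<epsilon> - \<kappa> / 2) * Y"
    by (simp add: field_simps)
  ultimately have "\<epsilon> / 2 * (X + Y) \<le> p r / p (Suc r) * X + Y - g * J"
    using gJ by linarith
  then have "p r * (\<epsilon> / 2 * (X + Y)) \<le> p r * (p r / p (Suc r) * X + Y - g * J)"
    using p by (intro mult_left_mono) auto
  also have "\<dots> = energy r"
    using p by (simp add: energy_def X_def Y_def J_def g_def power2_eq_square field_simps)
  finally show ?thesis by (simp add: X_def Y_def mult_ac)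
qed

lemma energy_diff_le:
  assumes "1 \<le> c" "(p (Suc r))\<^sup>2 \<le> c * (p r * p (Suc (Suc r)))"
  shows "energy (Suc r) - energy r \<le> p r * ((cmod (d r))\<^sup>2 + (cmod (d (Suc r)))\<^sup>2)
    * (c - 1 + 2 / p (Suc r) + \<bar>\<delta> (Suc r) / p (Suc r) - \<delta> r / p r\<bar> / 2)"
proof -
  define X Y J R where "X = (cmod (d r))\<^sup>2" and "Y = (cmod (d (Suc r)))\<^sup>2"
    and "J = Im (d (Suc r) * cnj (d r))" and "R = Re (d (Suc r) * cnj (d r))"
  define P0 P1 P2 where "P0 = p r" and "P1 = p (Suc r)" and "P2 = p (Suc (Suc r))"
  define g0 g1 where "g0 = \<delta> r / P0" and "g1 = \<delta> (Suc r) / P1"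
  have P: "1 \<le> P0" "0 < P1" "0 < P2" by (simp_all add: P0_def P1_def P2_def weight_ge_1 weight_pos)
  have XY: "0 \<le> X" "0 \<le> Y" by (simp_all add: X_def Y_def)
  have JR: "\<bar>J\<bar> \<le> (X + Y) / 2" "\<bar>R\<bar> \<le> (X + Y) / 2"
    using order_trans[OF abs_Im_le_cmod norm_mult_cnj_le] order_trans[OF abs_Re_le_cmod norm_mult_cnj_le]
    by (simp_all add: J_def R_def X_def Y_def)
  have "P1\<^sup>2 / P2 \<le> c * P0"
    using assms(2) P by (simp add: P0_def P1_def P2_def pos_divide_le_eq mult_ac)
  moreover have "1 / P1 \<le> P0 / P1" using P by (intro divide_right_mono) auto
  ultimately have "(P1\<^sup>2 / P2 - P0 + 1 / P1) * Y \<le> ((c - 1) * P0 + P0 / P1) * Y"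
    using XY by (intro mult_right_mono) (auto simp: algebra_simps)
  also have "\<dots> \<le> ((c - 1) * P0 + P0 / P1) * (X + Y)"
    using assms(1) P XY by (intro mult_left_mono) auto
  finally have term1: "(P1\<^sup>2 / P2 - P0 + 1 / P1) * Y \<le> ((c - 1) * P0 + P0 / P1) * (X + Y)" .
  have term2: "2 * P0 / P1 * R \<le> P0 / P1 * (X + Y)"
    using mult_left_mono[OF order_trans[OF abs_ge_self JR(2)], of "2 * P0 / P1"] P by simp
  have "\<delta> r - \<delta> (Suc r) * P0 / P1 = P0 * (g0 - g1)"
    using P by (simp add: g0_def g1_def field_simps)
  then have "(\<delta> r - \<delta> (Suc r) * P0 / P1) * J \<le> P0 * \<bar>g1 - g0\<bar> * \<bar>J\<bar>"
    using P by (simp add: abs_mult abs_minus_commute) (metis abs_ge_self abs_mult)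
  also have "\<dots> \<le> P0 * \<bar>g1 - g0\<bar> * ((X + Y) / 2)"
    using JR(1) P by (intro mult_left_mono) auto
  finally have term3: "(\<delta> r - \<delta> (Suc r) * P0 / P1) * J \<le> P0 * \<bar>g1 - g0\<bar> * ((X + Y) / 2)" .
  have "energy (Suc r) - energy r
      = (P1\<^sup>2 / P2 - P0 + 1 / P1) * Y + 2 * P0 / P1 * R + (\<delta> r - \<delta> (Suc r) * P0 / P1) * J"
    unfolding X_def Y_def J_def R_def P0_def P1_def P2_def by (rule energy_diff)
  also have "\<dots> \<le> ((c - 1) * P0 + P0 / P1) * (X + Y) + P0 / P1 * (X + Y)
      + P0 * \<bar>g1 - g0\<bar> * ((X + Y) / 2)"
    using term1 term2 term3 by linarith
  also have "\<dots> = P0 * (X + Y) * (c - 1 + 2 / P1 + \<bar>g1 - g0\<bar> / 2)"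
    using P by (simp add: field_simps)
  finally show ?thesis by (simp add: X_def Y_def P0_def P1_def g0_def g1_def)
qed

lemma eventually_energy_ge:
  assumes "(\<lambda>r. p (Suc r) / p r) \<longlonglongrightarrow> 1" "(\<lambda>r. \<delta> r / p r) \<longlonglongrightarrow> \<kappa>" "\<kappa> < 2"
  shows "\<forall>\<^sub>F r in sequentially.
    (2 - \<kappa>) / 8 * p r * ((cmod (d r))\<^sup>2 + (cmod (d (Suc r)))\<^sup>2) \<le> energy r"
proof -
  define \<epsilon> where "\<epsilon> = (2 - \<kappa>) / 4"
  have \<epsilon>: "0 < \<epsilon>" "\<epsilon> \<le> (2 - \<kappa>) / 4" using assms(3) by (simp_all add: \<epsilon>_def)
  have "(\<lambda>r. p r / p (Suc r)) \<longlonglongrightarrow> 1"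
    using tendsto_inverse[OF assms(1)] by simp
  then have "\<forall>\<^sub>F r in sequentially. 1 - \<epsilon> < p r / p (Suc r)"
    using \<epsilon> by (intro order_tendstoD) auto
  moreover have "\<forall>\<^sub>F r in sequentially. \<delta> r / p r < \<kappa> + \<epsilon>"
    using \<epsilon> assms(2) by (intro order_tendstoD) auto
  ultimately show ?thesis
    by eventually_elim (use energy_ge[OF \<epsilon>] in \<open>simp add: \<epsilon>_def\<close>)
qed

lemma energy_Suc_le:
  assumes "0 < \<eta>" "\<eta> * p r * ((cmod (d r))\<^sup>2 + (cmod (d (Suc r)))\<^sup>2) \<le> energy r"
    and "1 \<le> c" "(p (Suc r))\<^sup>2 \<le> c * (p r * p (Suc (Suc r)))"
  shows "energy (Suc r)
    \<le> (1 + (c - 1 + 2 / p (Suc r) + \<bar>\<delta> (Suc r) / p (Suc r) - \<delta> r / p r\<bar> / 2) / \<eta>) * energy r"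
proof -
  define S e where "S = (cmod (d r))\<^sup>2 + (cmod (d (Suc r)))\<^sup>2"
    and "e = c - 1 + 2 / p (Suc r) + \<bar>\<delta> (Suc r) / p (Suc r) - \<delta> r / p r\<bar> / 2"
  have "0 \<le> e" using assms(3) weight_pos[of "Suc r"] by (simp add: e_def)
  have "energy (Suc r) - energy r \<le> p r * S * e"
    unfolding S_def e_def using assms(3,4) by (rule energy_diff_le)
  also have "\<dots> = (\<eta> * p r * S) * (e / \<eta>)" using assms(1) by simp
  also have "\<dots> \<le> energy r * (e / \<eta>)"
    using assms(1,2) \<open>0 \<le> e\<close> by (intro mult_right_mono) (simp_all add: S_def)
  finally show ?thesis by (simp add: e_def algebra_simps)
qed

theorem summable_sq_norm:
  assumes summable_inverse: "summable (\<lambda>r. 1 / p r)"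
    and ratio: "(\<lambda>r. p (Suc r) / p r) \<longlonglongrightarrow> 1"
    and defect: "\<And>r. 1 \<le> c r" "summable (\<lambda>r. c r - 1)"
      "\<And>r. (p (Suc r))\<^sup>2 \<le> c r * (p r * p (Suc (Suc r)))"
    and coupling: "(\<lambda>r. \<delta> r / p r) \<longlonglongrightarrow> \<kappa>" "\<kappa> < 2"
    and coupling_variation: "summable (\<lambda>r. \<bar>\<delta> (Suc r) / p (Suc r) - \<delta> r / p r\<bar>)"
  shows "summable (\<lambda>r. (cmod (d r))\<^sup>2)"
proof -
  define \<eta> where "\<eta> = (2 - \<kappa>) / 8"
  define e where "e r = (c r - 1 + 2 / p (Suc r) + \<bar>\<delta> (Suc r) / p (Suc r) - \<delta> r / p r\<bar> / 2) / \<eta>"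
    for r
  have \<eta>: "0 < \<eta>" using coupling(2) by (simp add: \<eta>_def)
  obtain R where coercive:
    "\<And>r. r \<ge> R \<Longrightarrow> \<eta> * p r * ((cmod (d r))\<^sup>2 + (cmod (d (Suc r)))\<^sup>2) \<le> energy r"
    using eventually_energy_ge[OF ratio coupling] unfolding \<eta>_def eventually_sequentially by blast
  have energy_nonneg: "0 \<le> energy r" if "r \<ge> R" for r
  proof -
    have "0 \<le> \<eta> * p r * ((cmod (d r))\<^sup>2 + (cmod (d (Suc r)))\<^sup>2)"
      using \<eta> weight_pos[of r] by (intro mult_nonneg_nonneg) auto
    then show ?thesis using coercive[OF that] by linarith
  qed
  have "summable (\<lambda>r. 2 * (1 / p (Suc r)))"
    using summable_inverse by (intro summable_mult) (subst summable_Suc_iff)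
  then have "summable e"
    unfolding e_def using defect(2) coupling_variation by (intro summable_divide summable_add) auto
  moreover have "0 \<le> e r" for r
    using defect(1)[of r] \<eta> weight_pos[of "Suc r"] by (simp add: e_def)
  moreover have "energy (Suc r) \<le> (1 + e r) * energy r" if "r \<ge> R" for r
    unfolding e_def using \<eta> coercive[OF that] defect(1,3) by (rule energy_Suc_le)
  ultimately obtain M where M: "\<And>r. r \<ge> R \<Longrightarrow> energy r \<le> M"
    using bounded_of_summable_growth[of R energy e] energy_nonneg by blast
  have "(cmod (d (Suc r)))\<^sup>2 \<le> M / \<eta> * (1 / p r)" if "r \<ge> R" for r
  proof -
    have "\<eta> * p r * (cmod (d (Suc r)))\<^sup>2 \<le> \<eta> * p r * ((cmod (d r))\<^sup>2 + (cmod (d (Suc r)))\<^sup>2)"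
      using \<eta> weight_pos[of r] by (intro mult_left_mono) auto
    then have "\<eta> * p r * (cmod (d (Suc r)))\<^sup>2 \<le> M"
      using coercive[OF that] M[OF that] by linarith
    then show ?thesis using \<eta> weight_pos[of r] by (simp add: field_simps)
  qed
  then have "summable (\<lambda>r. (cmod (d (Suc r)))\<^sup>2)"
    by (intro summable_comparison_test'[OF summable_mult[OF summable_inverse, of "M / \<eta>"], of R]) simp
  then show ?thesis by (subst (asm) summable_Suc_iff)
qed

end

lemma summable_sq_norm_pochhammer_progression:
  fixes a D :: real
  assumes "1 \<le> a" "1 \<le> D" "3 \<le> k + l"
    and "weighted_recurrence (\<lambda>r. pochhammer_weight k l (a + r * D)) \<delta> d"
    and "(\<lambda>r. \<delta> r / pochhammer_weight k l (a + r * D)) \<longlonglongrightarrow> \<kappa>" "\<kappa> < 2"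
    and "summable (\<lambda>r. \<bar>\<delta> (Suc r) / pochhammer_weight k l (a + real (Suc r) * D)
      - \<delta> r / pochhammer_weight k l (a + r * D)\<bar>)"
  shows "summable (\<lambda>r. (cmod (d r))\<^sup>2)"
proof (rule weighted_recurrence.summable_sq_norm[OF assms(4),
      where c = "\<lambda>r. (1 + (D / (a + r * D))\<^sup>2) ^ (k + l)"])
  show "summable (\<lambda>r. 1 / pochhammer_weight k l (a + r * D))"
    using assms(1-3) by (rule summable_inverse_pochhammer_weight)
  show "(\<lambda>r. pochhammer_weight k l (a + real (Suc r) * D) / pochhammer_weight k l (a + r * D))
      \<longlonglongrightarrow> 1"
    using assms(1,2) by (intro tendsto_pochhammer_weight_ratio) auto
  show "summable (\<lambda>r. (1 + (D / (a + r * D))\<^sup>2) ^ (k + l) - 1)"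
    using assms(1,2) by (intro summable_pochhammer_weight_defect) auto
  show "(pochhammer_weight k l (a + real (Suc r) * D))\<^sup>2 \<le> (1 + (D / (a + r * D))\<^sup>2) ^ (k + l)
      * (pochhammer_weight k l (a + r * D) * pochhammer_weight k l (a + real (Suc (Suc r)) * D))" for r
    using assms(1,2) by (intro pochhammer_weight_progression_sq_le) auto
qed (use assms(5-7) in \<open>simp_all add: one_le_power\<close>)

theorem lemma4p14:
  fixes k l n0 :: nat and f :: "nat \<Rightarrow> real" and d :: "nat \<Rightarrow> complex"
    and \<kappa> :: real and lam :: "nat \<Rightarrow> complex"
  assumes "l < k" and "k + l \<ge> 3" and "l \<le> n0" and "n0 < k"
    and f_nonneg: "\<And>n. f n \<ge> 0"
    and rec: "\<And>r. d (r + 2)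
        - (1 + \<i> * complex_of_real (f (n0 + (r + 1) * (k - l))))
            / complex_of_real (beta l k (int (n0 + (r + 2) * (k - l)))) * d (r + 1)
        - complex_of_real (beta l k (int (n0 + (r + 1) * (k - l))))
            / complex_of_real (beta l k (int (n0 + (r + 2) * (k - l)))) * d r = 0"
    and asymp: "has_asymp_expansion
        (\<lambda>r. complex_of_real (f (n0 + (r + 1) * (k - l))
              / beta l k (int (n0 + (r + 2) * (k - l))))) lam"
    and lam0: "lam 0 = complex_of_real \<kappa>"
    and "\<kappa> < 2"
  shows "summable (\<lambda>r. (cmod (d r))\<^sup>2)"
proof -
  define a D :: real where "a = real n0 - real l + 1" and "D = real k - real l"
  define p where "p r = pochhammer_weight k l (a + real r * D)" for r
  define \<delta> where "\<delta> r = f (n0 + r * (k - l))" for r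
  have a: "1 \<le> a" and D: "1 \<le> D" using assms(1,3) by (simp_all add: a_def D_def)
  have beta_p: "beta l k (int (n0 + (r + 1) * (k - l))) = p r"
    and beta_p2: "beta l k (int (n0 + (r + 2) * (k - l))) = p (Suc r)" for r
    using beta_progression[OF assms(1,3), of r] beta_progression[OF assms(1,3), of "Suc r"]
    by (simp_all add: p_def a_def D_def add.commute)
  have recurrence: "weighted_recurrence p \<delta> d"
  proof
    show p_ge_1: "1 \<le> p r" for r
      unfolding p_def using a D by (intro one_le_pochhammer_weight) (simp add: add_increasing2)
    show "of_real (p (Suc r)) * d (Suc (Suc r))
        = of_real (p r) * d r + (1 + \<i> * of_real (\<delta> (Suc r))) * d (Suc r)" for r
    proof -
      have "d (Suc (Suc r)) - (1 + \<i> * of_real (\<delta> (Suc r))) / of_real (p (Suc r)) * d (Suc r)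
          - of_real (p r) / of_real (p (Suc r)) * d r = 0"
        using rec[of r] unfolding beta_p beta_p2 by (simp add: \<delta>_def numeral_2_eq_2)
      moreover have "complex_of_real (p (Suc r)) \<noteq> 0" using p_ge_1[of "Suc r"] by auto
      ultimately show ?thesis by (simp add: field_simps)
    qed
  qed (simp add: \<delta>_def f_nonneg)
  have "has_asymp_expansion (\<lambda>r. of_real (\<delta> (Suc r) / p (Suc r))) lam"
    using asymp unfolding beta_p2 by (simp add: \<delta>_def)
  note coupling = has_asymp_expansion_of_real_Suc[OF this]
  show ?thesis
    using a D assms(2) recurrence coupling(1) \<open>\<kappa> < 2\<close> coupling(2) lam0 unfolding p_def
    by (intro summable_sq_norm_pochhammer_progression) simp_all
qed

end
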